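(* Let $f$, $\mathcal{I}$, and the notation for streams be as in the context, and let $0 < c \le 1$ and $\epsilon > 0$. Let $\mathcal{A}$ be a $c$-compliant algorithm. Let $S_1, S_2, S_3$ be finite streams and suppose $\mathcal{A}(S_1\circ S_2) \le (1+\epsilon)\,\mathcal{A}(S_2)$. Then $$\mathcal{A}(S_2\circ S_3) \ge \frac{c}{2+\epsilon}\, f(\mathtt{OPT}_{123}),$$ where $\mathtt{OPT}_{123}$ is an optimal solution for the stream $S_1\circ S_2\circ S_3$.
   Context: Let $U$ be a finite set of items and $f: 2^U \to \mathbb{R}_{\ge 0}$ a nonnegative submodular function, i.e. $f(A\cup\{v\}) - f(A) \ge f(B\cup\{v\}) - f(B)$ for all $A\subseteq B\subset U$ and $v\in U\setminus B$. Let $\mathcal{I}\subseteq 2^U$ be a hereditary constraint: $A\in\mathcal{I}$ and $A'\subseteq A$ imply $A'\in\mathcal{I}$ (with $\emptyset\in\mathcal{I}$). A stream is a finite sequence of items of $U$; $S_1\circ S_2$ denotes concatenation ($S_1$ followed by $S_2$). For a stream $S$, an optimal solution $\mathtt{OPT}_S$ is a set maximizing $f$ over all sets in $\mathcal{I}$ consisting of items occurring in $S$. An algorithm $\mathcal{A}$ maps each stream $S$ to a set in $\mathcal{I}$ consisting of items occurring in $S$; $\mathcal{A}(S)$ denotes the $f$-value of that set. $\mathcal{A}$ is $c$-compliant if (Monotonicity) whenever $S_1$ is a prefix of $S_2$, $\mathcal{A}(S_1)\le\mathcal{A}(S_2)$; and ($c$-Approximation) for every stream $S$, $\mathcal{A}(S)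 \ge c\cdot f(\mathtt{OPT}_S)$. *)

theory Defs
  imports Complex_Main "HOL-Library.Sublist"
begin

definition nonneg_submodular :: "'a set \<Rightarrow> ('a set \<Rightarrow> real) \<Rightarrow> bool" where
  "nonneg_submodular U f \<longleftrightarrow>
     (\<forall>X. X \<subseteq> U \<longrightarrow> f X \<ge> 0) \<and>
     (\<forall>A B v. A \<subseteq> B \<longrightarrow> B \<subseteq> U \<longrightarrow> v \<in> U - B \<longrightarrow>
        f (insert v A) - f A \<ge> f (insert v B) - f B)"

definition hereditary :: "'a set \<Rightarrow> 'a set set \<Rightarrow> bool" where
  "hereditary U I \<longleftrightarrow> I \<subseteq> Pow U \<and> {} \<in> I \<and> (\<forall>A \<in> I. \<forall>A'. A' \<subseteq> A \<longrightarrow> A' \<in> I)"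

definition is_opt :: "('a set \<Rightarrow> real) \<Rightarrow> 'a set set \<Rightarrow> 'a list \<Rightarrow> 'a set \<Rightarrow> bool" where
  "is_opt f I S X \<longleftrightarrow> X \<in> I \<and> X \<subseteq> set S \<and>
     (\<forall>Y. Y \<in> I \<longrightarrow> Y \<subseteq> set S \<longrightarrow> f Y \<le> f X)"

definition c_compliant :: "'a set \<Rightarrow> ('a set \<Rightarrow> real) \<Rightarrow> 'a set set \<Rightarrow> real \<Rightarrow> ('a list \<Rightarrow> 'a set) \<Rightarrow> bool" where
  "c_compliant U f I c Alg \<longleftrightarrow>
     (\<forall>S. set S \<subseteq> U \<longrightarrow> Alg S \<in> I \<and> Alg S \<subseteq> set S) \<and>
     (\<forall>S1 S2. set S2 \<subseteq> U \<longrightarrow> prefix S1 S2 \<longrightarrow> f (Alg S1) \<le> f (Alg S2)) \<and>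
     (\<forall>S X. set S \<subseteq> U \<longrightarrow> is_opt f I S X \<longrightarrow> f (Alg S) \<ge> c * f X)"

end

theory Submission
  imports Defs
begin

text \<open>Split an optimal solution for \<open>S\<^sub>1 \<circ> S\<^sub>2 \<circ> S\<^sub>3\<close> into its part inside \<open>S\<^sub>1 \<circ> S\<^sub>2\<close> and
  the rest, which lies in \<open>S\<^sub>2 \<circ> S\<^sub>3\<close>. By subadditivity of the submodular function and
  heredity of the constraint, \<open>f(OPT\<^sub>1\<^sub>2\<^sub>3) \<le> f(OPT\<^sub>1\<^sub>2) + f(OPT\<^sub>2\<^sub>3)\<close>. The approximation
  guarantee bounds \<open>c f(OPT\<^sub>1\<^sub>2)\<close> by \<open>\<A>(S\<^sub>1 \<circ> S\<^sub>2) \<le> (1 + \<epsilon>) \<A>(S\<^sub>2)\<close> and \<open>c f(OPT\<^sub>2\<^sub>3)\<close> by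
  \<open>\<A>(S\<^sub>2 \<circ> S\<^sub>3)\<close>, and monotonicity gives \<open>\<A>(S\<^sub>2) \<le> \<A>(S\<^sub>2 \<circ> S\<^sub>3)\<close>.\<close>

lemma nonneg_submodular_disjoint_union_plus_empty_le:
  assumes sm: "nonneg_submodular U f" and "finite B"
    and "A \<inter> B = {}" and "A \<union> B \<subseteq> U"
  shows "f (A \<union> B) + f {} \<le> f A + f B"
  using assms(2-4)
proof (induction B rule: finite_induct)
  case empty
  then show ?case by simp
next
  case (insert v B)
  then have IH: "f (A \<union> B) + f {} \<le> f A + f B" by auto
  have "B \<subseteq> A \<union> B" "A \<union> B \<subseteq> U" "v \<in> U - (A \<union> B)"
    using insert.prems insert.hyps by auto
  then have "f (insert v (A \<union> B)) - f (A \<union> B) \<le> f (insert v B) - f B"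
    using sm unfolding nonneg_submodular_def by blast
  with IH show ?case by simp
qed

lemma nonneg_submodular_disjoint_union_le:
  assumes "nonneg_submodular U f" and "finite U"
    and "A \<inter> B = {}" and "A \<union> B \<subseteq> U"
  shows "f (A \<union> B) \<le> f A + f B"
proof -
  have "finite B" using assms(2,4) finite_subset by blast
  then have "f (A \<union> B) + f {} \<le> f A + f B"
    using nonneg_submodular_disjoint_union_plus_empty_le assms by blast
  moreover have "f {} \<ge> 0" using assms(1) unfolding nonneg_submodular_def by auto
  ultimately show ?thesis by linarith
qed

lemma is_opt_exists:
  assumes "finite U" and "hereditary U I"
  shows "\<exists>X. is_opt f I S X"
proof -
  let ?K = "{Y \<in> I. Y \<subseteq> set S}"
  have "finite ?K"
    using assms unfolding hereditary_def by (auto intro: finite_subset[of _ "Pow U"])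
  moreover have "{} \<in> ?K" using assms(2) unfolding hereditary_def by auto
  ultimately obtain X where "X \<in> ?K" "f X = Max (f ` ?K)"
    using Max_in[of "f ` ?K"] by fastforce
  with \<open>finite ?K\<close> show ?thesis unfolding is_opt_def by auto
qed

lemma is_opt_le_union:
  assumes "finite U" and "nonneg_submodular U f" and "hereditary U I"
    and "Z \<in> I" and "Z \<subseteq> set S \<union> set T"
    and "is_opt f I S X" and "is_opt f I T Y"
  shows "f Z \<le> f X + f Y"
proof -
  define A where "A = Z \<inter> set S"
  define B where "B = Z - set S"
  have feasible: "A \<in> I" "B \<in> I"
    using assms(3,4) unfolding hereditary_def A_def B_def by blast+
  have "Z \<subseteq> U" using assms(3,4) unfolding hereditary_def by blast
  then have "f Z \<le> f A + f B"
    using nonneg_submodular_disjoint_union_le[OF assms(2,1), of A B]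
    unfolding A_def B_def by (simp add: Int_Diff_Un Int_Diff_disjoint)
  also have "\<dots> \<le> f X + f Y"
    using assms(5-7) feasible unfolding is_opt_def A_def B_def
    by (intro add_mono) auto
  finally show ?thesis .
qed

theorem lemma1:
  fixes U :: "'a set" and f :: "'a set \<Rightarrow> real" and I :: "'a set set"
    and c \<epsilon> :: real and Alg :: "'a list \<Rightarrow> 'a set" and S1 S2 S3 :: "'a list"
    and OPT123 :: "'a set"
  assumes "finite U"
    and "nonneg_submodular U f"
    and "hereditary U I"
    and "0 < c" and "c \<le> 1" and "\<epsilon> > 0"
    and "c_compliant U f I c Alg"
    and "set S1 \<subseteq> U" and "set S2 \<subseteq> U" and "set S3 \<subseteq> U"
    and "f (Alg (S1 @ S2)) \<le> (1 + \<epsilon>) * f (Alg S2)"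
    and "is_opt f I (S1 @ S2 @ S3) OPT123"
  shows "f (Alg (S2 @ S3)) \<ge> c / (2 + \<epsilon>) * f OPT123"
proof -
  obtain X12 X23 where X12: "is_opt f I (S1 @ S2) X12" and X23: "is_opt f I (S2 @ S3) X23"
    using is_opt_exists[OF assms(1,3)] by meson
  have "f OPT123 \<le> f X12 + f X23"
    using assms(12) by (intro is_opt_le_union[OF assms(1-3) _ _ X12 X23]) (auto simp: is_opt_def)
  then have "c * f OPT123 \<le> c * f X12 + c * f X23"
    using assms(4) by (simp add: distrib_left[symmetric])
  moreover have "c * f X12 \<le> f (Alg (S1 @ S2))" "c * f X23 \<le> f (Alg (S2 @ S3))"
    using assms(7-10) X12 X23 unfolding c_compliant_def by simp_all
  moreover have "f (Alg S2) \<le> f (Alg (S2 @ S3))"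
    using assms(7,9,10) unfolding c_compliant_def by simp
  then have "(1 + \<epsilon>) * f (Alg S2) \<le> (1 + \<epsilon>) * f (Alg (S2 @ S3))"
    using assms(6) by simp
  ultimately have "c * f OPT123 \<le> (2 + \<epsilon>) * f (Alg (S2 @ S3))"
    using assms(11) by (simp add: algebra_simps)
  then show ?thesis
    using assms(6) by (simp add: field_simps mult.commute)
qed

end
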